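(* (1) Let $(A,\cdot,[-,-])$ be a transposed Poisson algebra and $\mathcal{B}$ a nondegenerate skew-symmetric bilinear form on $A$ that is a Connes cocycle on $(A,\cdot)$ and a symplectic form on $(A,[-,-])$. Define $\star,\circ$ by $\mathcal{B}(x\star y,z)=\mathcal{B}(y,x\cdot z)$ and $\mathcal{B}(x\circ y,z)=-\mathcal{B}(y,[x,z])$. Then $(A,\star,\circ)$ is a TZPD algebra with $x\star y+y\star x=x\cdot y$ and $x\circ y-y\circ x=[x,y]$. (2) Conversely, let $(A,\star,\circ)$ be a TZPD algebra, $x\cdot y=x\star y+y\star x$, $[x,y]=x\circ y-y\circ x$. Then $A\ltimes_{-\mathcal{L}^*_{\star},\mathcal{L}^*_{\circ}}A^*$ is a transposed Poisson algebra, and $\mathcal{B}_p$ is a Connes cocycle on its commutative associative product and a symplectic form on its Lie bracket.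
   Context: Finite-dimensional spaces, characteristic zero. $\mathcal{L}_\ast(x)y=x\ast y$; $\langle\rho^*(x)v^*,u\rangle=-\langle v^*,\rho(x)u\rangle$. For $(A,\cdot,[-,-])$ and linear $\mu,\rho:A\to\mathrm{End}(V)$, $A\ltimes_{\mu,\rho}V$ is $A\oplus V$ with $(x,u)\cdot(y,v)=(x\cdot y,\mu(x)v+\mu(y)u)$, $[(x,u),(y,v)]=([x,y],\rho(x)v-\rho(y)u)$. $\mathcal{B}_p((x,a^* ),(y,b^* ))=\langle x,b^*\rangle-\langle a^*,y\rangle$. Connes cocycle on $(A,\cdot)$: skew-symmetric $\mathcal{B}$ with $\mathcal{B}(x\cdot y,z)+\mathcal{B}(y\cdot z,x)+\mathcal{B}(z\cdot x,y)=0$; symplectic form on a Lie algebra: nondegenerate skew-symmetric $\mathcal{B}$ with $\mathcal{B}([x,y],z)+\mathcal{B}([y,z],x)+\mathcal{B}([z,x],y)=0$. Transposed Poisson algebra: $(A,\cdot)$ commutative associative, $(A,[-,-])$ Lie, $2z\cdot[x,y]=[z\cdot x,y]+[x,z\cdot y]$. Zinbiel: $x\star(y\star z)=(x\star y)\star z+(y\star x)\star z$. Pre-Lie: $(x\circ y)\circ z-x\circ(y\circ z)=(y\circ x)\circ z-y\circ(x\circ z)$. A TZPD algebra is $(A,\star,\circ)$ with $(A,\star)$ Zinbiel, $(A,\circ)$ pre-Lie, and for all $x,y,z$: $2y\circ(x\star z)=(x\star y+y\star x)\circ z+x\star(y\circ z)$; $2(x\circ y-y\circ x)\star z=x\star(y\circ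 z)-y\star(x\circ z)$; $y\circ(x\star z+z\star x)-x\circ(y\star z+z\star y)+z\star(x\circ y-y\circ x)=0$. *)

theory Defs
  imports Main "HOL-Library.Function_Algebras" "HOL-Library.Product_Plus"
begin

definition lin_map :: "('k \<Rightarrow> 'v \<Rightarrow> 'v) \<Rightarrow> ('k \<Rightarrow> 'w \<Rightarrow> 'w) \<Rightarrow> ('v::ab_group_add \<Rightarrow> 'w::ab_group_add) \<Rightarrow> bool" where
  "lin_map sv sw f \<longleftrightarrow> (\<forall>x y. f (x + y) = f x + f y) \<and> (\<forall>c x. f (sv c x) = sw c (f x))"

definition bilin_op :: "('k \<Rightarrow> 'v \<Rightarrow> 'v) \<Rightarrow> ('v::ab_group_add \<Rightarrow> 'v \<Rightarrow> 'v) \<Rightarrow> bool" where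
  "bilin_op sv m \<longleftrightarrow> (\<forall>x. lin_map sv sv (m x)) \<and> (\<forall>y. lin_map sv sv (\<lambda>x. m x y))"

definition bilin_form :: "('k::field \<Rightarrow> 'v \<Rightarrow> 'v) \<Rightarrow> ('v::ab_group_add \<Rightarrow> 'v \<Rightarrow> 'k) \<Rightarrow> bool" where
  "bilin_form sv B \<longleftrightarrow> (\<forall>x. lin_map sv (*) (B x)) \<and> (\<forall>y. lin_map sv (*) (\<lambda>x. B x y))"

definition skew_form :: "('v \<Rightarrow> 'v \<Rightarrow> 'k::field) \<Rightarrow> bool" where
  "skew_form B \<longleftrightarrow> (\<forall>x y. B x y = - B y x)"

definition nondeg_form :: "('v::zero \<Rightarrow> 'v \<Rightarrow> 'k::field) \<Rightarrow> bool" where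
  "nondeg_form B \<longleftrightarrow> (\<forall>x. (\<forall>y. B x y = 0) \<longrightarrow> x = 0)"

definition comm_assoc_alg :: "('k \<Rightarrow> 'v \<Rightarrow> 'v) \<Rightarrow> ('v::ab_group_add \<Rightarrow> 'v \<Rightarrow> 'v) \<Rightarrow> bool" where
  "comm_assoc_alg sv m \<longleftrightarrow> bilin_op sv m \<and> (\<forall>x y. m x y = m y x)
     \<and> (\<forall>x y z. m (m x y) z = m x (m y z))"

definition lie_alg :: "('k \<Rightarrow> 'v \<Rightarrow> 'v) \<Rightarrow> ('v::ab_group_add \<Rightarrow> 'v \<Rightarrow> 'v) \<Rightarrow> bool" where
  "lie_alg sv br \<longleftrightarrow> bilin_op sv br \<and> (\<forall>x. br x x = 0)
     \<and> (\<forall>x y z. br x (br y z) + br y (br z x) + br z (br x y) = 0)"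

definition transposed_poisson :: "('k \<Rightarrow> 'v \<Rightarrow> 'v) \<Rightarrow> ('v::ab_group_add \<Rightarrow> 'v \<Rightarrow> 'v) \<Rightarrow> ('v \<Rightarrow> 'v \<Rightarrow> 'v) \<Rightarrow> bool" where
  "transposed_poisson sv m br \<longleftrightarrow> comm_assoc_alg sv m \<and> lie_alg sv br
     \<and> (\<forall>x y z. m z (br x y) + m z (br x y) = br (m z x) y + br x (m z y))"

definition zinbiel :: "('k \<Rightarrow> 'v \<Rightarrow> 'v) \<Rightarrow> ('v::ab_group_add \<Rightarrow> 'v \<Rightarrow> 'v) \<Rightarrow> bool" where
  "zinbiel sv st \<longleftrightarrow> bilin_op sv st
     \<and> (\<forall>x y z. st x (st y z) = st (st x y) z + st (st y x) z)"

definition pre_lie :: "('k \<Rightarrow> 'v \<Rightarrow> 'v) \<Rightarrow> ('v::ab_group_add \<Rightarrow> 'v \<Rightarrow> 'v) \<Rightarrow> bool" where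
  "pre_lie sv ci \<longleftrightarrow> bilin_op sv ci
     \<and> (\<forall>x y z. ci (ci x y) z - ci x (ci y z) = ci (ci y x) z - ci y (ci x z))"

definition TZPD :: "('k \<Rightarrow> 'v \<Rightarrow> 'v) \<Rightarrow> ('v::ab_group_add \<Rightarrow> 'v \<Rightarrow> 'v) \<Rightarrow> ('v \<Rightarrow> 'v \<Rightarrow> 'v) \<Rightarrow> bool" where
  "TZPD sv st ci \<longleftrightarrow> zinbiel sv st \<and> pre_lie sv ci
     \<and> (\<forall>x y z. ci y (st x z) + ci y (st x z) = ci (st x y + st y x) z + st x (ci y z))
     \<and> (\<forall>x y z. st (ci x y - ci y x) z + st (ci x y - ci y x) z = st x (ci y z) - st y (ci x z))
     \<and> (\<forall>x y z. ci y (st x z + st z x) - ci x (st y z + st z y) + st z (ci x y - ci y x) = 0)"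

definition connes_cocycle :: "('k::field \<Rightarrow> 'v \<Rightarrow> 'v) \<Rightarrow> ('v::ab_group_add \<Rightarrow> 'v \<Rightarrow> 'v) \<Rightarrow> ('v \<Rightarrow> 'v \<Rightarrow> 'k) \<Rightarrow> bool" where
  "connes_cocycle sv m B \<longleftrightarrow> bilin_form sv B \<and> skew_form B
     \<and> (\<forall>x y z. B (m x y) z + B (m y z) x + B (m z x) y = 0)"

definition symplectic_form :: "('k::field \<Rightarrow> 'v \<Rightarrow> 'v) \<Rightarrow> ('v::ab_group_add \<Rightarrow> 'v \<Rightarrow> 'v) \<Rightarrow> ('v \<Rightarrow> 'v \<Rightarrow> 'k) \<Rightarrow> bool" where
  "symplectic_form sv br B \<longleftrightarrow> bilin_form sv B \<and> nondeg_form B \<and> skew_form B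
     \<and> (\<forall>x y z. B (br x y) z + B (br y z) x + B (br z x) y = 0)"

section \<open>Concrete model: A = 'k^n as functions 'n \<Rightarrow> 'k ('n finite), A* = 'k^n with the
  canonical pairing, and A \<oplus> A* as pairs\<close>

definition vsc :: "'k::field \<Rightarrow> ('n \<Rightarrow> 'k) \<Rightarrow> ('n \<Rightarrow> 'k)" where
  "vsc c x = (\<lambda>i. c * x i)"

definition psc :: "'k::field \<Rightarrow> ('n \<Rightarrow> 'k) \<times> ('n \<Rightarrow> 'k) \<Rightarrow> ('n \<Rightarrow> 'k) \<times> ('n \<Rightarrow> 'k)" where
  "psc c p = (vsc c (fst p), vsc c (snd p))"

definition dpair :: "('n::finite \<Rightarrow> 'k::field) \<Rightarrow> ('n \<Rightarrow> 'k) \<Rightarrow> 'k" where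
  "dpair f x = (\<Sum>i\<in>UNIV. f i * x i)"

definition dual_rep :: "(('n::finite \<Rightarrow> 'k::field) \<Rightarrow> ('n \<Rightarrow> 'k) \<Rightarrow> ('n \<Rightarrow> 'k)) \<Rightarrow> ('n \<Rightarrow> 'k) \<Rightarrow> ('n \<Rightarrow> 'k) \<Rightarrow> ('n \<Rightarrow> 'k)" where
  "dual_rep rho x v = (THE w. \<forall>u. dpair w u = - dpair v (rho x u))"

definition sd_mul :: "('a \<Rightarrow> 'a \<Rightarrow> 'a) \<Rightarrow> ('a \<Rightarrow> 'b \<Rightarrow> 'b::plus) \<Rightarrow> 'a \<times> 'b \<Rightarrow> 'a \<times> 'b \<Rightarrow> 'a \<times> 'b" where
  "sd_mul m mu p q = (m (fst p) (fst q), mu (fst p) (snd q) + mu (fst q) (snd p))"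

definition sd_br :: "('a \<Rightarrow> 'a \<Rightarrow> 'a) \<Rightarrow> ('a \<Rightarrow> 'b \<Rightarrow> 'b::minus) \<Rightarrow> 'a \<times> 'b \<Rightarrow> 'a \<times> 'b \<Rightarrow> 'a \<times> 'b" where
  "sd_br br rho p q = (br (fst p) (fst q), rho (fst p) (snd q) - rho (fst q) (snd p))"

definition Bp :: "('n::finite \<Rightarrow> 'k::field) \<times> ('n \<Rightarrow> 'k) \<Rightarrow> ('n \<Rightarrow> 'k) \<times> ('n \<Rightarrow> 'k) \<Rightarrow> 'k" where
  "Bp p q = dpair (snd q) (fst p) - dpair (snd p) (fst q)"

end

theory Submission
  imports Defs "HOL.Vector_Spaces"
begin

text \<open>
  (1) Nondegeneracy of \<open>B\<close> makes \<open>\<star>\<close> and \<open>\<circ>\<close> well defined (every linear functional is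
  represented by \<open>B\<close>), and any identity between them can be tested against \<open>B(-, w)\<close>. Moving the
  operations to the other side of \<open>B\<close> turns the Zinbiel and pre-Lie identities into the statements
  that \<open>\<star>\<close> and \<open>\<circ>\<close> are representations of \<open>(A,\<cdot>)\<close> and \<open>(A,[-,-])\<close>, i.e. associativity and
  Jacobi, and the first two compatibility identities into the transposed Poisson identity.
  The cocycle conditions give \<open>x \<star> y + y \<star> x = x \<cdot> y\<close> and \<open>x \<circ> y - y \<circ> x = [x,y]\<close>.

  (2) On \<open>A \<oplus> A\<^sup>*\<close> the \<open>A\<close>-component of each identity is the corresponding identity of
  \<open>(A,\<cdot>,[-,-])\<close>; the \<open>A\<^sup>*\<close>-component, paired with an arbitrary \<open>u \<in> A\<close>, becomes again one of
  the representation properties or compatibility identities of \<open>\<star>\<close> and \<open>\<circ>\<close>.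

  In both directions the third compatibility identity is linked to the transposed Poisson
  identity by a single computation: modulo the first two identities, the defect of the
  transposed Poisson identity of \<open>(A,\<cdot>,[-,-])\<close> is three times the defect of the third one.
\<close>

lemma lin_map_add: "lin_map sv sw f \<Longrightarrow> f (x + y) = f x + f y"
  by (simp add: lin_map_def)

lemma lin_map_scale: "lin_map sv sw f \<Longrightarrow> f (sv c x) = sw c (f x)"
  by (simp add: lin_map_def)

lemma lin_map_zero: "lin_map sv sw f \<Longrightarrow> f 0 = 0"
  by (metis add_cancel_right_right lin_map_add)

lemma lin_map_minus: "lin_map sv sw f \<Longrightarrow> f (- x) = - f x"
  by (metis add.right_inverse add_eq_0_iff lin_map_add lin_map_zero)

lemma lin_map_diff: "lin_map sv sw f \<Longrightarrow> f (x - y) = f x - f y"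
  by (metis diff_conv_add_uminus lin_map_add lin_map_minus)

lemma lin_map_sum: "lin_map sv sw f \<Longrightarrow> f (sum g A) = (\<Sum>a\<in>A. f (g a))"
  by (induction A rule: infinite_finite_induct) (auto simp: lin_map_zero lin_map_add)

lemma lin_map_comp: "lin_map s1 s2 f \<Longrightarrow> lin_map s2 s3 g \<Longrightarrow> lin_map s1 s3 (\<lambda>x. g (f x))"
  by (simp add: lin_map_def)

lemma bilin_op_left: "bilin_op sv m \<Longrightarrow> lin_map sv sv (\<lambda>x. m x y)"
  by (simp add: bilin_op_def)

lemma bilin_op_right: "bilin_op sv m \<Longrightarrow> lin_map sv sv (m x)"
  by (simp add: bilin_op_def)

lemma bilin_form_left: "bilin_form sv B \<Longrightarrow> lin_map sv (*) (\<lambda>x. B x y)"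
  by (simp add: bilin_form_def)

lemma bilin_form_right: "bilin_form sv B \<Longrightarrow> lin_map sv (*) (B x)"
  by (simp add: bilin_form_def)

lemma bilin_op_simps:
  assumes "bilin_op sv m"
  shows "m (x + y) z = m x z + m y z" "m (x - y) z = m x z - m y z" "m (- x) z = - m x z"
    "m 0 z = 0" "m z (x + y) = m z x + m z y" "m z (x - y) = m z x - m z y"
    "m z (- x) = - m z x" "m z 0 = 0"
  using lin_map_add[OF bilin_op_left[OF assms]] lin_map_diff[OF bilin_op_left[OF assms]]
    lin_map_minus[OF bilin_op_left[OF assms]] lin_map_zero[OF bilin_op_left[OF assms]]
    lin_map_add[OF bilin_op_right[OF assms]] lin_map_diff[OF bilin_op_right[OF assms]]
    lin_map_minus[OF bilin_op_right[OF assms]] lin_map_zero[OF bilin_op_right[OF assms]]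
  by simp_all

lemma bilin_form_simps:
  assumes "bilin_form sv B"
  shows "B (x + y) z = B x z + B y z" "B (x - y) z = B x z - B y z" "B (- x) z = - B x z"
    "B 0 z = 0" "B z (x + y) = B z x + B z y" "B z (x - y) = B z x - B z y"
    "B z (- x) = - B z x" "B z 0 = 0"
  using lin_map_add[OF bilin_form_left[OF assms]] lin_map_diff[OF bilin_form_left[OF assms]]
    lin_map_minus[OF bilin_form_left[OF assms]] lin_map_zero[OF bilin_form_left[OF assms]]
    lin_map_add[OF bilin_form_right[OF assms]] lin_map_diff[OF bilin_form_right[OF assms]]
    lin_map_minus[OF bilin_form_right[OF assms]] lin_map_zero[OF bilin_form_right[OF assms]]
  by simp_all

lemma nondeg_form_eqI:
  assumes "bilin_form sv B" "nondeg_form B" "\<And>w. B u w = B v w"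
  shows "u = v"
proof -
  have "\<forall>w. B (u - v) w = 0"
    using assms(3) by (simp add: bilin_form_simps[OF assms(1)])
  then show ?thesis
    using assms(2) unfolding nondeg_form_def by (metis eq_iff_diff_eq_0)
qed

section \<open>Coordinates on \<open>'k\<^sup>n\<close> and the Riesz representation\<close>

definition unit_vec :: "'n \<Rightarrow> 'n \<Rightarrow> 'k::field" where
  "unit_vec j = (\<lambda>i. if i = j then 1 else 0)"

lemma sum_apply_fun: "(sum f A) i = (\<Sum>a\<in>A. f a i)"
  by (induction A rule: infinite_finite_induct) auto

lemma sum_unit_vec_coordinates: "(x::'n::finite \<Rightarrow> 'k::field) = (\<Sum>j\<in>UNIV. vsc (x j) (unit_vec j))"
proof -
  have "\<And>i. (\<Sum>j\<in>UNIV. x j * (if i = j then 1 else 0)) = x i"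
    by (simp add: if_distrib cong: if_cong)
  then show ?thesis by (auto simp: fun_eq_iff vsc_def unit_vec_def sum_apply_fun)
qed

lemma vector_space_vsc: "vector_space (vsc :: 'k::field \<Rightarrow> ('n \<Rightarrow> 'k) \<Rightarrow> _)"
  by unfold_locales (auto simp: vsc_def fun_eq_iff algebra_simps)

lemma finite_dimensional_vsc:
  "finite_dimensional_vector_space (vsc :: 'k::field \<Rightarrow> ('n::finite \<Rightarrow> 'k) \<Rightarrow> _) (range unit_vec)"
proof -
  interpret vector_space "vsc :: 'k \<Rightarrow> ('n \<Rightarrow> 'k) \<Rightarrow> _" by (rule vector_space_vsc)
  show ?thesis
  proof
    show "finite (range unit_vec :: ('n \<Rightarrow> 'k) set)" by simp
    show "span (range unit_vec :: ('n \<Rightarrow> 'k) set) = UNIV"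
    proof (rule set_eqI, simp)
      fix x :: "'n \<Rightarrow> 'k"
      have "(\<Sum>j\<in>UNIV. vsc (x j) (unit_vec j)) \<in> span (range unit_vec)"
        by (intro span_sum span_scale span_base) auto
      then show "x \<in> span (range unit_vec)" using sum_unit_vec_coordinates[of x] by simp
    qed
    show "independent (range unit_vec :: ('n \<Rightarrow> 'k) set)"
    proof
      assume "dependent (range unit_vec :: ('n \<Rightarrow> 'k) set)"
      then obtain u where u: "\<exists>v\<in>range unit_vec. u v \<noteq> 0"
          "(\<Sum>v\<in>range unit_vec. vsc (u v) v) = (0::'n \<Rightarrow> 'k)"
        by (auto simp: dependent_finite)
      have "inj (unit_vec :: 'n \<Rightarrow> 'n \<Rightarrow> 'k)" by (auto simp: inj_def unit_vec_def fun_eq_iff)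
      then have "(\<Sum>j\<in>UNIV. vsc (u (unit_vec j)) (unit_vec j)) = (0::'n \<Rightarrow> 'k)"
        using u(2) by (simp add: sum.reindex)
      then have "\<And>i. (\<Sum>j\<in>UNIV. u (unit_vec j) * (if i = j then 1 else 0)) = (0::'k)"
        by (auto simp: fun_eq_iff vsc_def unit_vec_def sum_apply_fun)
      then have "\<And>i. u (unit_vec i) = 0"
        by (simp add: if_distrib cong: if_cong)
      then show False using u(1) by auto
    qed
  qed
qed

lemma lin_map_functional_coordinates:
  fixes g :: "('n::finite \<Rightarrow> 'k::field) \<Rightarrow> 'k"
  assumes "lin_map vsc (*) g"
  shows "g z = (\<Sum>j\<in>UNIV. z j * g (unit_vec j))"
  by (subst sum_unit_vec_coordinates[of z]) (simp add: lin_map_sum[OF assms] lin_map_scale[OF assms])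

text \<open>The map \<open>v \<mapsto> B(v, -)\<close>, in coordinates, is an injective endomorphism of a finite-dimensional
  space, hence surjective.\<close>

lemma nondeg_form_represents:
  fixes B :: "('n::finite \<Rightarrow> 'k::field) \<Rightarrow> ('n \<Rightarrow> 'k) \<Rightarrow> 'k"
  assumes B: "bilin_form vsc B" "nondeg_form B" and f: "lin_map vsc (*) f"
  shows "\<exists>v. \<forall>z. B v z = f z"
proof -
  interpret finite_dimensional_vector_space "vsc :: 'k \<Rightarrow> ('n \<Rightarrow> 'k) \<Rightarrow> _" "range unit_vec"
    by (rule finite_dimensional_vsc)
  define T where "T v = (\<lambda>j. B v (unit_vec j))" for v
  have "Vector_Spaces.linear vsc vsc T"
    by unfold_locales
      (auto simp: T_def fun_eq_iff vsc_def bilin_form_simps[OF B(1)]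
        lin_map_scale[OF bilin_form_left[OF B(1)], unfolded vsc_def])
  moreover have "inj T"
  proof (rule injI)
    fix x y assume "T x = T y"
    then have "B x (unit_vec j) = B y (unit_vec j)" for j by (simp add: T_def fun_eq_iff)
    then show "x = y"
      by (intro nondeg_form_eqI[OF B])
        (subst (1 2) lin_map_functional_coordinates[OF bilin_form_right[OF B(1)]], simp)
  qed
  ultimately obtain v where "T v = (\<lambda>j. f (unit_vec j))"
    using linear_inj_imp_surj by (metis surjD)
  then have "B v (unit_vec j) = f (unit_vec j)" for j by (simp add: T_def fun_eq_iff)
  then have "B v z = f z" for z
    by (subst lin_map_functional_coordinates[OF bilin_form_right[OF B(1)]],
        subst lin_map_functional_coordinates[OF f]) simp
  then show ?thesis by blast
qed

lemma dpair_simps: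
  fixes f g x y :: "'n::finite \<Rightarrow> 'k::field"
  shows "dpair (f + g) x = dpair f x + dpair g x" "dpair (f - g) x = dpair f x - dpair g x"
    "dpair (- f) x = - dpair f x" "dpair 0 x = 0" "dpair (vsc c f) x = c * dpair f x"
    "dpair f (x + y) = dpair f x + dpair f y" "dpair f (x - y) = dpair f x - dpair f y"
    "dpair f (- x) = - dpair f x" "dpair f 0 = 0" "dpair f (vsc c x) = c * dpair f x"
    "dpair (2 * f) x = 2 * dpair f x"
  by (simp_all add: dpair_def vsc_def algebra_simps sum.distrib sum_subtractf sum_negf
      sum_distrib_left)

lemma lin_map_dpair: "lin_map vsc (*) (dpair f)"
  by (simp add: lin_map_def dpair_simps)

lemma dpair_unit_vec: "dpair f (unit_vec j) = f j" "dpair (unit_vec j) f = f j"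
  by (simp_all add: dpair_def unit_vec_def if_distrib[where f="\<lambda>t. f _ * t"]
      if_distrib[where f="\<lambda>t. t * f _"] cong: if_cong)

lemma dpair_ext: "(\<And>u. dpair f u = dpair g u) \<Longrightarrow> f = g"
  by (rule ext) (metis dpair_unit_vec(1))

lemma dpair_dual_rep:
  assumes "lin_map vsc vsc (rho x)"
  shows "dpair (dual_rep rho x v) u = - dpair v (rho x u)"
proof -
  define w where "w = (\<lambda>j. - dpair v (rho x (unit_vec j)))"
  have lin: "lin_map vsc (*) (\<lambda>u. - dpair v (rho x u))"
    using lin_map_comp[OF assms lin_map_dpair] by (simp add: lin_map_def)
  have w: "dpair w u = - dpair v (rho x u)" for u
    by (subst lin_map_functional_coordinates[OF lin]) (simp add: dpair_def w_def mult.commute sum_negf)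
  have "\<forall>u. dpair (dual_rep rho x v) u = - dpair v (rho x u)"
    unfolding dual_rep_def
    by (rule theI[of _ w]) (auto simp: w intro: dpair_ext)
  then show ?thesis by simp
qed

section \<open>Identities of TZPD algebras\<close>

text \<open>No division is needed: the difference of the two sides is an integer combination of four
  instances of the first compatibility identity and one of the second.\<close>

lemma transposed_poisson_defect:
  fixes st ci m br :: "'v::ab_group_add \<Rightarrow> 'v \<Rightarrow> 'v"
  assumes st: "bilin_op sv st" and ci: "bilin_op sv ci"
    and m: "\<And>a b. m a b = st a b + st b a" and br: "\<And>a b. br a b = ci a b - ci b a"
    and first: "\<And>x y z. ci y (st x z) + ci y (st x z) = ci (m x y) z + st x (ci y z)"
    and second: "\<And>x y z. st (br x y) z + st (br x y) z = st x (ci y z) - st y (ci x z)"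
  shows "m z (br x y) + m z (br x y) - (br (m z x) y + br x (m z y))
    = (ci y (m x z) - ci x (m y z) + st z (br x y))
    + (ci y (m x z) - ci x (m y z) + st z (br x y))
    + (ci y (m x z) - ci x (m y z) + st z (br x y))"
proof -
  let ?r = "\<lambda>x y z. ci y (st x z) + ci y (st x z) - (ci (m x y) z + st x (ci y z))"
  let ?s = "st (br x y) z + st (br x y) z - (st x (ci y z) - st y (ci x z))"
  have "?r x y z = 0" "?r z y x = 0" "?r y x z = 0" "?r z x y = 0" "?s = 0"
    using first second by simp_all
  moreover have "m z (br x y) + m z (br x y) - (br (m z x) y + br x (m z y))
      + (?r x y z + ?r z y x - ?r y x z - ?r z x y - ?s)
    = (ci y (m x z) - ci x (m y z) + st z (br x y))
    + (ci y (m x z) - ci x (m y z) + st z (br x y))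
    + (ci y (m x z) - ci x (m y z) + st z (br x y))"
    by (simp add: m br bilin_op_simps[OF st] bilin_op_simps[OF ci] algebra_simps)
  ultimately show ?thesis by simp
qed

lemma zinbiel_iff_left_mult_rep:
  assumes "bilin_op sv st"
  shows "zinbiel sv st \<longleftrightarrow> (\<forall>x y z. st x (st y z) = st (st x y + st y x) z)"
  by (simp add: zinbiel_def assms bilin_op_simps[OF assms])

lemma pre_lie_iff_left_mult_rep:
  fixes ci :: "'v::ab_group_add \<Rightarrow> 'v \<Rightarrow> 'v"
  assumes "bilin_op sv ci"
  shows "pre_lie sv ci \<longleftrightarrow> (\<forall>x y z. ci (ci x y - ci y x) z = ci x (ci y z) - ci y (ci x z))"
proof -
  have "a - b = c - d \<longleftrightarrow> a - c = b - d" for a b c d :: 'v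
    by (auto simp: algebra_simps)
  then show ?thesis
    by (simp add: pre_lie_def assms bilin_op_simps[OF assms])
qed

lemma vsc_add: "vsc c (x + y) = vsc c x + vsc c y" and vsc_diff: "vsc c (x - y) = vsc c x - vsc c y"
  by (simp_all add: vsc_def fun_eq_iff algebra_simps)

lemma bilin_op_vsc_add_swap: "bilin_op vsc st \<Longrightarrow> bilin_op vsc (\<lambda>x y. st x y + st y x)"
  by (simp add: bilin_op_def lin_map_def vsc_add algebra_simps)

lemma bilin_op_vsc_diff_swap: "bilin_op vsc ci \<Longrightarrow> bilin_op vsc (\<lambda>x y. ci x y - ci y x)"
  by (simp add: bilin_op_def lin_map_def vsc_diff algebra_simps)

lemma zinbiel_comm_assoc_alg:
  assumes "zinbiel vsc st"
  shows "comm_assoc_alg vsc (\<lambda>x y. st x y + st y x)"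
proof -
  have st: "bilin_op vsc st" using assms by (simp add: zinbiel_def)
  have "st x (st y z) = st (st x y + st y x) z" for x y z
    using assms by (simp add: zinbiel_iff_left_mult_rep[OF st])
  then show ?thesis
    by (simp add: comm_assoc_alg_def bilin_op_vsc_add_swap[OF st] bilin_op_simps[OF st] add_ac)
qed

lemma pre_lie_lie_alg:
  assumes "pre_lie vsc ci"
  shows "lie_alg vsc (\<lambda>x y. ci x y - ci y x)"
proof -
  have ci: "bilin_op vsc ci" using assms by (simp add: pre_lie_def)
  let ?p = "\<lambda>x y z. ci (ci x y) z - ci x (ci y z) - (ci (ci y x) z - ci y (ci x z))"
  have "?p x y z = 0" for x y z using assms by (simp add: pre_lie_def)
  moreover have "ci x (ci y z - ci z y) - ci (ci y z - ci z y) x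
      + (ci y (ci z x - ci x z) - ci (ci z x - ci x z) y)
      + (ci z (ci x y - ci y x) - ci (ci x y - ci y x) z)
      + (?p x y z + ?p y z x + ?p z x y) = 0" for x y z
    by (simp add: bilin_op_simps[OF ci] algebra_simps)
  ultimately show ?thesis
    by (simp add: lie_alg_def bilin_op_vsc_diff_swap[OF ci])
qed

section \<open>From a compatible form to a TZPD algebra\<close>

locale transposed_poisson_symplectic =
  fixes sv :: "'k::field_char_0 \<Rightarrow> 'v::ab_group_add \<Rightarrow> 'v"
    and m br :: "'v \<Rightarrow> 'v \<Rightarrow> 'v" and B :: "'v \<Rightarrow> 'v \<Rightarrow> 'k"
  assumes transposed_poisson: "transposed_poisson sv m br"
    and nondeg: "nondeg_form B"
    and connes_cocycle: "connes_cocycle sv m B"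
    and symplectic: "symplectic_form sv br B"
begin

lemma m_bilin: "bilin_op sv m"
  and m_comm: "m x y = m y x"
  and m_assoc: "m (m x y) z = m x (m y z)"
  using transposed_poisson unfolding transposed_poisson_def comm_assoc_alg_def by blast+

lemma br_bilin: "bilin_op sv br"
  and br_jacobi: "br x (br y z) + br y (br z x) + br z (br x y) = 0"
  and transposed_poisson_identity: "m z (br x y) + m z (br x y) = br (m z x) y + br x (m z y)"
  using transposed_poisson unfolding transposed_poisson_def lie_alg_def by blast+

lemma br_anticomm: "br y x = - br x y"
proof -
  have "br (x + y) (x + y) = 0"
    using transposed_poisson by (simp add: transposed_poisson_def lie_alg_def)
  then have "br x y + br y x = 0"
    using transposed_poisson
    by (simp add: transposed_poisson_def lie_alg_def bilin_op_simps[OF br_bilin] add.commute)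
  then show ?thesis by (simp add: eq_neg_iff_add_eq_0 add.commute)
qed

lemma B_bilin: "bilin_form sv B"
  and B_skew: "B x y = - B y x"
  and B_cocycle: "B (m x y) z + B (m y z) x + B (m z x) y = 0"
  using connes_cocycle unfolding connes_cocycle_def skew_form_def by blast+

lemma B_symplectic: "B (br x y) z + B (br y z) x + B (br z x) y = 0"
  using symplectic by (simp add: symplectic_form_def)

lemmas B_simps = bilin_form_simps[OF B_bilin]

lemma B_eqI: "(\<And>w. B u w = B v w) \<Longrightarrow> u = v"
  by (rule nondeg_form_eqI[OF B_bilin nondeg])

lemma triple_eq_zero:
  fixes v :: 'v
  assumes "v + v + v = 0"
  shows "v = 0"
proof (rule B_eqI)
  fix w
  have "B v w + B v w + B v w = 0"
    using arg_cong[OF assms, of "\<lambda>u. B u w"] by (simp add: B_simps)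
  then have "3 * B v w = 0" by algebra
  then show "B v w = B 0 w" by (simp add: B_simps)
qed

end

locale adjoint_products = transposed_poisson_symplectic +
  fixes st ci :: "'v::ab_group_add \<Rightarrow> 'v \<Rightarrow> 'v"
  assumes st_adjoint: "B (st x y) z = B y (m x z)"
    and ci_adjoint: "B (ci x y) z = - B y (br x z)"
begin

lemma st_add_swap: "st x y + st y x = m x y"
proof (rule B_eqI)
  fix w
  have "B (m x y) w = - B (m y w) x - B (m w x) y"
    using B_cocycle[of x y w] by (simp add: algebra_simps eq_neg_iff_add_eq_0)
  then show "B (st x y + st y x) w = B (m x y) w"
    by (simp add: B_simps st_adjoint B_skew[of _ x] B_skew[of _ y] m_comm[of w x])
qed

lemma ci_diff_swap: "ci x y - ci y x = br x y"
proof (rule B_eqI)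
  fix w
  have "B (br x y) w = - B (br y w) x - B (br w x) y"
    using B_symplectic[of x y w] by (simp add: algebra_simps eq_neg_iff_add_eq_0)
  then show "B (ci x y - ci y x) w = B (br x y) w"
    by (simp add: B_simps ci_adjoint B_skew[of _ x] B_skew[of _ y] br_anticomm[of w x])
qed

lemma st_bilin: "bilin_op sv st"
  unfolding bilin_op_def lin_map_def
proof (intro conjI allI)
  fix x y z c
  show "st x (y + z) = st x y + st x z" "st (x + z) y = st x y + st z y"
    by (rule B_eqI; simp add: B_simps st_adjoint bilin_op_simps[OF m_bilin])+
  show "st x (sv c y) = sv c (st x y)"
    by (rule B_eqI) (simp add: B_simps st_adjoint lin_map_scale[OF bilin_form_left[OF B_bilin]])
  show "st (sv c x) y = sv c (st x y)"
    by (rule B_eqI) (simp add: B_simps st_adjoint lin_map_scale[OF bilin_form_left[OF B_bilin]]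
        lin_map_scale[OF bilin_form_right[OF B_bilin]] lin_map_scale[OF bilin_op_left[OF m_bilin]])
qed

lemma ci_bilin: "bilin_op sv ci"
  unfolding bilin_op_def lin_map_def
proof (intro conjI allI)
  fix x y z c
  show "ci x (y + z) = ci x y + ci x z" "ci (x + z) y = ci x y + ci z y"
    by (rule B_eqI; simp add: B_simps ci_adjoint bilin_op_simps[OF br_bilin])+
  show "ci x (sv c y) = sv c (ci x y)"
    by (rule B_eqI) (simp add: B_simps ci_adjoint lin_map_scale[OF bilin_form_left[OF B_bilin]])
  show "ci (sv c x) y = sv c (ci x y)"
    by (rule B_eqI) (simp add: B_simps ci_adjoint lin_map_scale[OF bilin_form_left[OF B_bilin]]
        lin_map_scale[OF bilin_form_right[OF B_bilin]] lin_map_scale[OF bilin_op_left[OF br_bilin]])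
qed

lemma st_m_left: "st (m x y) z = st x (st y z)"
proof (rule B_eqI)
  fix w
  have "m (m x y) w = m y (m x w)" by (metis m_assoc m_comm)
  then show "B (st (m x y) z) w = B (st x (st y z)) w" by (simp add: st_adjoint)
qed

lemma ci_br_left: "ci (br x y) z = ci x (ci y z) - ci y (ci x z)"
proof (rule B_eqI)
  fix w
  have "br (br x y) w = br x (br y w) - br y (br x w)"
    using br_jacobi[of x y w] br_anticomm[of w x] br_anticomm[of w "br x y"]
    by (simp add: bilin_op_simps[OF br_bilin] algebra_simps eq_neg_iff_add_eq_0)
  then show "B (ci (br x y) z) w = B (ci x (ci y z) - ci y (ci x z)) w"
    by (simp add: B_simps ci_adjoint)
qed

lemma st_zinbiel: "zinbiel sv st"
  by (simp add: zinbiel_iff_left_mult_rep[OF st_bilin] st_add_swap st_m_left)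

lemma ci_pre_lie: "pre_lie sv ci"
  by (simp add: pre_lie_iff_left_mult_rep[OF ci_bilin] ci_diff_swap ci_br_left)

lemma first_compatibility: "ci y (st x z) + ci y (st x z) = ci (m x y) z + st x (ci y z)"
proof (rule B_eqI)
  fix w
  have "B z (m x (br y w) + m x (br y w)) = B z (br (m x y) w + br y (m x w))"
    by (simp only: transposed_poisson_identity)
  then show "B (ci y (st x z) + ci y (st x z)) w = B (ci (m x y) z + st x (ci y z)) w"
    by (simp add: B_simps ci_adjoint st_adjoint)
qed

lemma second_compatibility: "st (br x y) z + st (br x y) z = st x (ci y z) - st y (ci x z)"
proof (rule B_eqI)
  fix w
  have "B z (m w (br x y) + m w (br x y)) = B z (br (m w x) y + br x (m w y))"
    by (simp only: transposed_poisson_identity)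
  then show "B (st (br x y) z + st (br x y) z) w = B (st x (ci y z) - st y (ci x z)) w"
    by (simp add: B_simps ci_adjoint st_adjoint br_anticomm[of _ y] m_comm[of w])
qed

lemma third_compatibility: "ci y (m x z) - ci x (m y z) + st z (br x y) = 0"
proof (rule triple_eq_zero)
  have "m z (br x y) + m z (br x y) - (br (m z x) y + br x (m z y))
    = (ci y (m x z) - ci x (m y z) + st z (br x y))
    + (ci y (m x z) - ci x (m y z) + st z (br x y))
    + (ci y (m x z) - ci x (m y z) + st z (br x y))"
    by (rule transposed_poisson_defect[where m = m and br = br and st = st and ci = ci,
          OF st_bilin ci_bilin])
      (simp_all add: st_add_swap ci_diff_swap first_compatibility second_compatibility)
  then show "ci y (m x z) - ci x (m y z) + st z (br x y)
    + (ci y (m x z) - ci x (m y z) + st z (br x y))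
    + (ci y (m x z) - ci x (m y z) + st z (br x y)) = 0"
    by (simp add: transposed_poisson_identity)
qed

lemma TZPD: "TZPD sv st ci"
  using third_compatibility first_compatibility second_compatibility
  by (simp add: TZPD_def st_zinbiel ci_pre_lie st_add_swap ci_diff_swap)

end

lemma adjoint_op_exists:
  fixes m :: "('n::finite \<Rightarrow> 'k::field) \<Rightarrow> ('n \<Rightarrow> 'k) \<Rightarrow> ('n \<Rightarrow> 'k)"
  assumes B: "bilin_form vsc B" "nondeg_form B" and m: "\<And>x. lin_map vsc vsc (m x)"
  shows "\<exists>st. \<forall>x y z. B (st x y) z = B y (m x z)"
proof -
  have "\<exists>v. \<forall>z. B v z = B y (m x z)" for x y
    by (rule nondeg_form_represents[OF B lin_map_comp[OF m bilin_form_right[OF B(1)]]])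
  then have "\<forall>z. B (SOME v. \<forall>z. B v z = B y (m x z)) z = B y (m x z)" for x y
    by (rule someI_ex)
  then show ?thesis by (intro exI[of _ "\<lambda>x y. SOME v. \<forall>z. B v z = B y (m x z)"]) blast
qed

lemma adjoint_products_exist:
  fixes m br :: "('n::finite \<Rightarrow> 'k::field_char_0) \<Rightarrow> ('n \<Rightarrow> 'k) \<Rightarrow> ('n \<Rightarrow> 'k)"
  assumes "transposed_poisson_symplectic vsc m br B"
  shows "\<exists>st ci. (\<forall>x y z. B (st x y) z = B y (m x z)) \<and> (\<forall>x y z. B (ci x y) z = - B y (br x z))"
proof -
  interpret transposed_poisson_symplectic vsc m br B by (rule assms)
  obtain st where "\<forall>x y z. B (st x y) z = B y (m x z)"
    using adjoint_op_exists[OF B_bilin nondeg, of m] bilin_op_right[OF m_bilin] by blast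
  moreover obtain ci where "\<forall>x y z. B (ci x y) z = B y (br z x)"
    using adjoint_op_exists[OF B_bilin nondeg, of "\<lambda>x z. br z x"] bilin_op_left[OF br_bilin]
    by blast
  then have "\<forall>x y z. B (ci x y) z = - B y (br x z)"
    by (metis B_simps(7) br_anticomm)
  ultimately show ?thesis by blast
qed

section \<open>From a TZPD algebra to the double \<open>A \<ltimes> A\<^sup>*\<close>\<close>

lemma Bp_bilin: "bilin_form psc Bp"
  by (auto simp: bilin_form_def lin_map_def Bp_def psc_def dpair_simps algebra_simps)

lemma Bp_skew: "skew_form Bp"
  by (simp add: skew_form_def Bp_def)

lemma Bp_nondeg: "nondeg_form Bp"
  unfolding nondeg_form_def
proof (intro allI impI)
  fix p :: "('n::finite \<Rightarrow> 'k::field) \<times> ('n \<Rightarrow> 'k)"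
  assume "\<forall>q. Bp p q = 0"
  then have "Bp p (0, unit_vec j) = 0" "Bp p (unit_vec j, 0) = 0" for j
    by blast+
  then show "p = 0"
    by (simp add: Bp_def dpair_simps dpair_unit_vec prod_eq_iff fun_eq_iff)
qed

locale TZPD_algebra =
  fixes st ci :: "('n::finite \<Rightarrow> 'k::field_char_0) \<Rightarrow> ('n \<Rightarrow> 'k) \<Rightarrow> ('n \<Rightarrow> 'k)"
  assumes TZPD: "TZPD vsc st ci"
begin

definition mul :: "('n \<Rightarrow> 'k) \<Rightarrow> ('n \<Rightarrow> 'k) \<Rightarrow> ('n \<Rightarrow> 'k)" where
  "mul x y = st x y + st y x"

definition brk :: "('n \<Rightarrow> 'k) \<Rightarrow> ('n \<Rightarrow> 'k) \<Rightarrow> ('n \<Rightarrow> 'k)" where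
  "brk x y = ci x y - ci y x"

definition st_coadj :: "('n \<Rightarrow> 'k) \<Rightarrow> ('n \<Rightarrow> 'k) \<Rightarrow> ('n \<Rightarrow> 'k)" where
  "st_coadj x v = - dual_rep st x v"

definition dmul :: "('n \<Rightarrow> 'k) \<times> ('n \<Rightarrow> 'k) \<Rightarrow> ('n \<Rightarrow> 'k) \<times> ('n \<Rightarrow> 'k) \<Rightarrow> ('n \<Rightarrow> 'k) \<times> ('n \<Rightarrow> 'k)" where
  "dmul = sd_mul mul st_coadj"

definition dbr :: "('n \<Rightarrow> 'k) \<times> ('n \<Rightarrow> 'k) \<Rightarrow> ('n \<Rightarrow> 'k) \<times> ('n \<Rightarrow> 'k) \<Rightarrow> ('n \<Rightarrow> 'k) \<times> ('n \<Rightarrow> 'k)" where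
  "dbr = sd_br brk (dual_rep ci)"

lemma st_zinbiel: "zinbiel vsc st"
  and ci_pre_lie: "pre_lie vsc ci"
  and first_compatibility: "ci y (st x z) + ci y (st x z) = ci (mul x y) z + st x (ci y z)"
  and second_compatibility: "st (brk x y) z + st (brk x y) z = st x (ci y z) - st y (ci x z)"
  and third_compatibility: "ci y (mul x z) - ci x (mul y z) + st z (brk x y) = 0"
  using TZPD unfolding TZPD_def mul_def brk_def by blast+

lemma st_bilin: "bilin_op vsc st"
  using st_zinbiel by (simp add: zinbiel_def)

lemma ci_bilin: "bilin_op vsc ci"
  using ci_pre_lie by (simp add: pre_lie_def)

lemmas st_ci_simps = bilin_op_simps[OF st_bilin] bilin_op_simps[OF ci_bilin]

lemma st_mul_left: "st (mul x y) z = st x (st y z)"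
  using st_zinbiel by (simp add: zinbiel_iff_left_mult_rep[OF st_bilin] mul_def)

lemma ci_brk_left: "ci (brk x y) z = ci x (ci y z) - ci y (ci x z)"
  using ci_pre_lie by (simp add: pre_lie_iff_left_mult_rep[OF ci_bilin] brk_def)

lemma mul_comm_assoc: "comm_assoc_alg vsc mul"
  using zinbiel_comm_assoc_alg[OF st_zinbiel] by (simp add: mul_def[abs_def])

lemma brk_lie: "lie_alg vsc brk"
  using pre_lie_lie_alg[OF ci_pre_lie] by (simp add: brk_def[abs_def])

lemma mul_brk_transposed_poisson: "transposed_poisson vsc mul brk"
proof -
  have "mul z (brk x y) + mul z (brk x y) - (brk (mul z x) y + brk x (mul z y)) = 0" for x y z
    using transposed_poisson_defect[where m = mul and br = brk and st = st and ci = ci and x = x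
        and y = y and z = z, OF st_bilin ci_bilin mul_def brk_def first_compatibility
        second_compatibility]
    by (simp add: third_compatibility)
  then show ?thesis
    by (simp add: transposed_poisson_def mul_comm_assoc brk_lie)
qed

lemma mul_bilin: "bilin_op vsc mul"
  and mul_comm: "mul x y = mul y x"
  and mul_assoc: "mul (mul x y) z = mul x (mul y z)"
  using mul_comm_assoc unfolding comm_assoc_alg_def by blast+

lemma brk_bilin: "bilin_op vsc brk"
  and brk_alt: "brk x x = 0"
  and brk_jacobi: "brk x (brk y z) + brk y (brk z x) + brk z (brk x y) = 0"
  using brk_lie unfolding lie_alg_def by blast+

lemmas mul_brk_simps = bilin_op_simps[OF mul_bilin] bilin_op_simps[OF brk_bilin]

lemmas scale_simps = lin_map_scale[OF bilin_op_left[OF st_bilin]] lin_map_scale[OF bilin_op_right[OF st_bilin]]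
  lin_map_scale[OF bilin_op_left[OF ci_bilin]] lin_map_scale[OF bilin_op_right[OF ci_bilin]]
  lin_map_scale[OF bilin_op_left[OF mul_bilin]] lin_map_scale[OF bilin_op_right[OF mul_bilin]]
  lin_map_scale[OF bilin_op_left[OF brk_bilin]] lin_map_scale[OF bilin_op_right[OF brk_bilin]]

lemma dpair_st_coadj: "dpair (st_coadj x v) u = dpair v (st x u)"
  by (simp add: st_coadj_def dpair_simps dpair_dual_rep[OF bilin_op_right[OF st_bilin]])

lemma dpair_ci_dual: "dpair (dual_rep ci x v) u = - dpair v (ci x u)"
  by (rule dpair_dual_rep[OF bilin_op_right[OF ci_bilin]])

lemma dmul_bilin: "bilin_op psc dmul"
  unfolding bilin_op_def lin_map_def
proof (intro conjI allI)
  fix p q r :: "('n \<Rightarrow> 'k) \<times> ('n \<Rightarrow> 'k)" and c :: 'k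
  show "dmul p (q + r) = dmul p q + dmul p r" "dmul (q + r) p = dmul q p + dmul r p"
    by (auto simp: dmul_def sd_mul_def prod_eq_iff mul_brk_simps intro!: dpair_ext)
      (simp_all add: dpair_simps dpair_st_coadj st_ci_simps)
  show "dmul p (psc c q) = psc c (dmul p q)" "dmul (psc c q) p = psc c (dmul q p)"
    by (auto simp: dmul_def sd_mul_def psc_def prod_eq_iff scale_simps intro!: dpair_ext)
      (simp_all add: dpair_simps dpair_st_coadj scale_simps algebra_simps)
qed

lemma dbr_bilin: "bilin_op psc dbr"
  unfolding bilin_op_def lin_map_def
proof (intro conjI allI)
  fix p q r :: "('n \<Rightarrow> 'k) \<times> ('n \<Rightarrow> 'k)" and c :: 'k
  show "dbr p (q + r) = dbr p q + dbr p r" "dbr (q + r) p = dbr q p + dbr r p"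
    by (auto simp: dbr_def sd_br_def prod_eq_iff mul_brk_simps intro!: dpair_ext)
      (simp_all add: dpair_simps dpair_ci_dual st_ci_simps)
  show "dbr p (psc c q) = psc c (dbr p q)" "dbr (psc c q) p = psc c (dbr q p)"
    by (auto simp: dbr_def sd_br_def psc_def prod_eq_iff scale_simps intro!: dpair_ext)
      (simp_all add: dpair_simps dpair_ci_dual scale_simps algebra_simps)
qed

lemma dmul_comm_assoc: "comm_assoc_alg psc dmul"
proof -
  have "dmul p q = dmul q p" for p q
    by (simp add: dmul_def sd_mul_def mul_comm add.commute)
  moreover have "dmul (dmul p q) r = dmul p (dmul q r)" for p q r
    by (auto simp: dmul_def sd_mul_def prod_eq_iff mul_assoc intro!: dpair_ext)
      (simp add: dpair_simps dpair_st_coadj st_ci_simps st_mul_left[symmetric] mul_comm)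
  ultimately show ?thesis
    by (simp add: comm_assoc_alg_def dmul_bilin)
qed

lemma dbr_lie: "lie_alg psc dbr"
proof -
  have "dbr p p = 0" for p
    by (simp add: dbr_def sd_br_def brk_alt zero_prod_def)
  moreover have "dbr p (dbr q r) + dbr q (dbr r p) + dbr r (dbr p q) = 0" for p q r
    by (auto simp: dbr_def sd_br_def prod_eq_iff brk_jacobi intro!: dpair_ext)
      (simp add: dpair_simps dpair_ci_dual st_ci_simps ci_brk_left)
  ultimately show ?thesis
    by (simp add: lie_alg_def dbr_bilin)
qed

lemma dmul_dbr_transposed_poisson: "transposed_poisson psc dmul dbr"
proof -
  have tp: "mul z (brk x y) + mul z (brk x y) = brk (mul z x) y + brk x (mul z y)" for x y z
    using mul_brk_transposed_poisson by (simp add: transposed_poisson_def)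
  have ci_st: "dpair v (ci y (st x u)) = (dpair v (ci (mul x y) u) + dpair v (st x (ci y u))) / 2"
    for v x y u
    using arg_cong[OF first_compatibility[where x = x and y = y and z = u], of "dpair v"]
    by (simp only: dpair_simps) (simp add: field_simps)
  have st_brk: "dpair v (st (brk x y) u) = (dpair v (st x (ci y u)) - dpair v (st y (ci x u))) / 2"
    for v x y u
    using arg_cong[OF second_compatibility[where x = x and y = y and z = u], of "dpair v"]
    by (simp only: dpair_simps) (simp add: field_simps)
  have "dmul r (dbr p q) + dmul r (dbr p q) = dbr (dmul r p) q + dbr p (dmul r q)" for p q r
    by (auto simp: dbr_def dmul_def sd_br_def sd_mul_def prod_eq_iff tp intro!: dpair_ext)
      (simp add: dpair_simps dpair_ci_dual dpair_st_coadj st_ci_simps ci_st st_brk field_simps)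
  then show ?thesis
    using dmul_comm_assoc dbr_lie by (simp add: transposed_poisson_def)
qed

lemma Bp_connes_cocycle: "connes_cocycle psc dmul Bp"
proof -
  have "Bp (dmul p q) r + Bp (dmul q r) p + Bp (dmul r p) q = 0" for p q r
    by (simp add: Bp_def dmul_def sd_mul_def dpair_simps dpair_st_coadj mul_def)
  then show ?thesis
    using Bp_bilin Bp_skew by (simp add: connes_cocycle_def)
qed

lemma Bp_symplectic: "symplectic_form psc dbr Bp"
proof -
  have "Bp (dbr p q) r + Bp (dbr q r) p + Bp (dbr r p) q = 0" for p q r
    by (simp add: Bp_def dbr_def sd_br_def dpair_simps dpair_ci_dual brk_def)
  then show ?thesis
    using Bp_bilin Bp_skew Bp_nondeg by (simp add: symplectic_form_def)
qed

lemma double_transposed_poisson_symplectic: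
  "let m = (\<lambda>x y. st x y + st y x); br = (\<lambda>x y. ci x y - ci y x);
       M = sd_mul m (\<lambda>x v. - dual_rep st x v);
       L = sd_br br (dual_rep ci)
   in transposed_poisson psc M L \<and> connes_cocycle psc M Bp \<and> symplectic_form psc L Bp"
  using dmul_dbr_transposed_poisson Bp_connes_cocycle Bp_symplectic
  by (simp add: Let_def dmul_def dbr_def mul_def[abs_def] brk_def[abs_def] st_coadj_def[abs_def])

end

theorem mainTheorem19:
  shows
  "(\<forall>(m :: ('n::finite \<Rightarrow> 'k::field_char_0) \<Rightarrow> ('n \<Rightarrow> 'k) \<Rightarrow> ('n \<Rightarrow> 'k)) br B.
      transposed_poisson vsc m br \<and> bilin_form vsc B \<and> skew_form B \<and> nondeg_form B
      \<and> connes_cocycle vsc m B \<and> symplectic_form vsc br B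
      \<longrightarrow> (\<exists>st ci. (\<forall>x y z. B (st x y) z = B y (m x z)) \<and> (\<forall>x y z. B (ci x y) z = - B y (br x z)))
        \<and> (\<forall>st ci. (\<forall>x y z. B (st x y) z = B y (m x z)) \<and> (\<forall>x y z. B (ci x y) z = - B y (br x z))
             \<longrightarrow> TZPD vsc st ci \<and> (\<forall>x y. st x y + st y x = m x y) \<and> (\<forall>x y. ci x y - ci y x = br x y)))
   \<and>
   (\<forall>(st :: ('n \<Rightarrow> 'k) \<Rightarrow> ('n \<Rightarrow> 'k) \<Rightarrow> ('n \<Rightarrow> 'k)) ci.
      TZPD vsc st ci \<longrightarrow>
      (let m = (\<lambda>x y. st x y + st y x); br = (\<lambda>x y. ci x y - ci y x);
           M = sd_mul m (\<lambda>x v. - dual_rep st x v);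
           L = sd_br br (dual_rep ci)
       in transposed_poisson psc M L \<and> connes_cocycle psc M Bp \<and> symplectic_form psc L Bp))"
proof (intro conjI allI impI)
  fix m br :: "('n \<Rightarrow> 'k) \<Rightarrow> ('n \<Rightarrow> 'k) \<Rightarrow> ('n \<Rightarrow> 'k)" and B
  assume "transposed_poisson vsc m br \<and> bilin_form vsc B \<and> skew_form B \<and> nondeg_form B
    \<and> connes_cocycle vsc m B \<and> symplectic_form vsc br B"
  then have compatible: "transposed_poisson_symplectic vsc m br B"
    by (simp add: transposed_poisson_symplectic_def)
  then show "\<exists>st ci. (\<forall>x y z. B (st x y) z = B y (m x z)) \<and> (\<forall>x y z. B (ci x y) z = - B y (br x z))"
    by (rule adjoint_products_exist)
  fix st ci
  assume "(\<forall>x y z. B (st x y) z = B y (m x z)) \<and> (\<forall>x y z. B (ci x y) z = - B y (br x z))"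
  then interpret adjoint_products vsc m br B st ci
    using compatible by (simp add: adjoint_products_def adjoint_products_axioms_def)
  show "TZPD vsc st ci" "st x y + st y x = m x y" "ci x y - ci y x = br x y" for x y
    by (simp_all add: TZPD st_add_swap ci_diff_swap)
next
  fix st ci :: "('n \<Rightarrow> 'k) \<Rightarrow> ('n \<Rightarrow> 'k) \<Rightarrow> ('n \<Rightarrow> 'k)"
  assume "TZPD vsc st ci"
  then interpret TZPD_algebra st ci by unfold_locales
  show "let m = (\<lambda>x y. st x y + st y x); br = (\<lambda>x y. ci x y - ci y x);
           M = sd_mul m (\<lambda>x v. - dual_rep st x v);
           L = sd_br br (dual_rep ci)
       in transposed_poisson psc M L \<and> connes_cocycle psc M Bp \<and> symplectic_form psc L Bp"
    by (rule double_transposed_poisson_symplectic)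
qed

end
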